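(* Let $\tilde P$ be a convex polygon with $k$ vertices $\tilde P_1,\dots,\tilde P_k$, and suppose that exactly $j$ pairs of its sides are parallel, $0\le j\le k/2$. Set $n=k-j$. Then the list of vertices of $\tilde P$ can be rewritten (allowing consecutive repetitions of a vertex) as a list $P_1,\dots,P_{2n}$ (indices modulo $2n$) such that for each $1\le i\le n$, either the side $P_iP_{i+1}$ is parallel to the side $P_{i+n}P_{i+n+1}$, or one of these two sides, say $P_{i+n}P_{i+n+1}$, degenerates to a point; in the latter case the other side $P_iP_{i+1}$ is non-degenerate and the line through $P_{i+n}=P_{i+n+1}$ parallel to $P_iP_{i+1}$ lies outside the interior of $P$. *)

theory Defs
  imports "HOL-Analysis.Analysis"
begin

definition cross2 :: "real^2 \<Rightarrow> real^2 \<Rightarrow> real" where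
  "cross2 u v = u$1 * v$2 - u$2 * v$1"

definition convex_polygon :: "nat \<Rightarrow> (nat \<Rightarrow> real^2) \<Rightarrow> bool" where
  "convex_polygon k p \<longleftrightarrow> k \<ge> 3 \<and>
     ((\<forall>i<k. \<forall>l<k. l \<noteq> i \<and> l \<noteq> (i+1) mod k \<longrightarrow>
          cross2 (p ((i+1) mod k) - p i) (p l - p i) > 0) \<or>
      (\<forall>i<k. \<forall>l<k. l \<noteq> i \<and> l \<noteq> (i+1) mod k \<longrightarrow>
          cross2 (p ((i+1) mod k) - p i) (p l - p i) < 0))"

definition parallel_vec :: "real^2 \<Rightarrow> real^2 \<Rightarrow> bool" where
  "parallel_vec u v \<longleftrightarrow> u \<noteq> 0 \<and> v \<noteq> 0 \<and> (\<exists>c. u = c *\<^sub>R v)"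

definition side_vec :: "nat \<Rightarrow> (nat \<Rightarrow> real^2) \<Rightarrow> nat \<Rightarrow> real^2" where
  "side_vec k p a = p ((a+1) mod k) - p a"

definition num_parallel_pairs :: "nat \<Rightarrow> (nat \<Rightarrow> real^2) \<Rightarrow> nat" where
  "num_parallel_pairs k p =
     card {(a, b). a < b \<and> b < k \<and> parallel_vec (side_vec k p a) (side_vec k p b)}"

definition polygon_interior :: "nat \<Rightarrow> (nat \<Rightarrow> real^2) \<Rightarrow> (real^2) set" where
  "polygon_interior k p = interior (convex hull (p ` {..<k}))"

definition line_dir :: "real^2 \<Rightarrow> real^2 \<Rightarrow> (real^2) set" where
  "line_dir c u = {c + t *\<^sub>R u | t. True}"

end

theory Submission
  imports Defs
begin

text \<open>Cut the boundary of a counterclockwise polygon after its last side \<open>g\<close>. The sides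
  before the first one turning past the direction of \<open>g\<close> form a lower chain, the remaining
  sides reversed form an upper chain, and all these directions lie in the half-plane of directions
  at angle \<open>(0, \<pi>]\<close> from \<open>g\<close>, where each chain is sorted by angle. Merging the two sorted
  chains as in the rotating calipers, every step passes the side of one chain whose direction comes
  first, or a parallel pair of sides together; so there are \<open>n = k - j\<close> steps. Listing the current
  vertex of the lower chain at each step, followed by the current vertex of the upper chain at
  each step, gives \<open>P\<^sub>1, \<dots>, P\<^sub>2\<^sub>n\<close>. At a step passing only one side, the other chain
  sits at a vertex where the passed direction lies between the directions of its two sides, so
  the line through that vertex parallel to the passed side supports the polygon. A clockwise
  polygon becomes counterclockwise by swapping the coordinates.\<close>

lemma Suc_mod_neq: "x < k \<Longrightarrow> 2 \<le> k \<Longrightarrow> Suc x mod k \<noteq> (x::nat)"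
  by (cases "Suc x = k") auto

lemma Suc_Suc_mod_neq: "x < k \<Longrightarrow> 3 \<le> k \<Longrightarrow> Suc (Suc x) mod k \<noteq> (x::nat)"
  by (cases "Suc (Suc x) < k") (auto simp: le_mod_geq)

lemma discrete_ivt:
  fixes f :: "nat \<Rightarrow> nat"
  assumes "\<And>t. t < N \<Longrightarrow> f (Suc t) = f t \<or> f (Suc t) = Suc (f t)" "f 0 \<le> a" "a < f N"
  shows "\<exists>t<N. f t = a \<and> f (Suc t) = Suc a"
  using assms
proof (induction N)
  case (Suc N)
  show ?case
  proof (cases "a < f N")
    case True
    then obtain t where "t < N" "f t = a \<and> f (Suc t) = Suc a" using Suc by auto
    then show ?thesis by (intro exI[of _ t]) auto
  next
    case False
    have step: "f (Suc N) = f N \<or> f (Suc N) = Suc (f N)" using Suc.prems(1) by simp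
    then have "f N = a" using Suc.prems(3) False by linarith
    with step Suc.prems(3) show ?thesis by (intro exI[of _ N]) auto
  qed
qed simp

section \<open>Plane vectors and angular order\<close>

lemma vec2_eq_iff: "(u::real^2) = v \<longleftrightarrow> u$1 = v$1 \<and> u$2 = v$2"
  by (simp add: vec_eq_iff forall_2)

lemma inner_vec2: "inner (u::real^2) v = u$1 * v$1 + u$2 * v$2"
  by (simp add: inner_vec_def sum_2)

lemma cross2_antisym: "cross2 u v = - cross2 v u"
  by (simp add: cross2_def)

lemma cross2_self [simp]: "cross2 u u = 0"
  by (simp add: cross2_def)

lemma cross2_minus [simp]: "cross2 (- u) v = - cross2 u v" "cross2 u (- v) = - cross2 u v"
  by (simp_all add: cross2_def)

lemma cross2_add: "cross2 u (v + w) = cross2 u v + cross2 u w" "cross2 (v + w) u = cross2 v u + cross2 w u"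
  by (simp_all add: cross2_def algebra_simps)

lemma cross2_diff: "cross2 u (v - w) = cross2 u v - cross2 u w" "cross2 (v - w) u = cross2 v u - cross2 w u"
  by (simp_all add: cross2_def algebra_simps)

lemma cross2_scaleR: "cross2 u (c *\<^sub>R v) = c * cross2 u v" "cross2 (c *\<^sub>R v) u = c * cross2 v u"
  by (simp_all add: cross2_def algebra_simps)

lemma cross2_plucker:
  "cross2 u v * cross2 g w + cross2 v w * cross2 g u + cross2 w u * cross2 g v = 0"
  by (simp add: cross2_def algebra_simps)

lemma inner_cross2_expand: "inner g g * cross2 u v = inner g u * cross2 g v - cross2 g u * inner g v"
  by (simp add: cross2_def inner_vec2 algebra_simps)

lemma cross2_eq_0_parallel:
  assumes "cross2 u v = 0" "v \<noteq> 0"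
  shows "parallel_vec u v \<or> u = 0"
proof -
  have e: "inner v v *\<^sub>R u = inner u v *\<^sub>R v"
    using assms(1) by (simp add: vec2_eq_iff cross2_def inner_vec2 algebra_simps)
  have "u = (inner u v / inner v v) *\<^sub>R v"
    using arg_cong[OF e, of "scaleR (1 / inner v v)"] assms(2) by (simp add: field_simps)
  then show ?thesis using assms(2) unfolding parallel_vec_def by blast
qed

lemma parallel_vec_cross2: "parallel_vec u v \<Longrightarrow> cross2 u v = 0"
  by (auto simp: parallel_vec_def cross2_scaleR)

text \<open>The direction of \<open>w\<close> makes an angle in \<open>(0, \<pi>]\<close> with \<open>g\<close>. On such directions
  \<open>cross2 u v > 0\<close> is a strict order, the angular order.\<close>

definition halfplane_dir :: "real^2 \<Rightarrow> real^2 \<Rightarrow> bool" where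
  "halfplane_dir g w \<longleftrightarrow> cross2 g w > 0 \<or> (cross2 g w = 0 \<and> inner g w < 0)"

lemma halfplane_dir_cross2_nonneg: "halfplane_dir g w \<Longrightarrow> cross2 g w \<ge> 0"
  by (auto simp: halfplane_dir_def)

lemma halfplane_dir_nonzero: "halfplane_dir g w \<Longrightarrow> g \<noteq> 0"
  by (auto simp: halfplane_dir_def cross2_def)

lemma halfplane_dir_opposite_max:
  assumes "halfplane_dir g u" "cross2 g u = 0" "halfplane_dir g v"
  shows "cross2 u v \<le> 0"
proof -
  have "inner g g * cross2 u v = inner g u * cross2 g v"
    using inner_cross2_expand[of g u v] assms(2) by simp
  also have "\<dots> \<le> 0"
    using assms(1,2) halfplane_dir_cross2_nonneg[OF assms(3)]
    by (simp add: halfplane_dir_def mult_nonpos_nonneg)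
  finally have "inner g g * cross2 u v \<le> 0" .
  moreover have "inner g g > 0" using halfplane_dir_nonzero[OF assms(1)] by simp
  ultimately show ?thesis by (smt (verit) mult_pos_pos)
qed

lemma halfplane_dir_opposite_parallel:
  assumes "halfplane_dir g u" "cross2 g u = 0" "cross2 u v = 0"
  shows "cross2 g v = 0"
proof -
  have "inner g u * cross2 g v = 0"
    using inner_cross2_expand[of g u v] assms(2,3) by simp
  moreover have "inner g u < 0" using assms(1,2) by (simp add: halfplane_dir_def)
  ultimately show ?thesis by simp
qed

lemma halfplane_cross2_cycle:
  assumes "halfplane_dir g u" "halfplane_dir g v" "halfplane_dir g w"
    and "cross2 u v \<ge> 0" "cross2 v w \<ge> 0" "cross2 w u \<ge> 0"
  shows "cross2 v w * cross2 g u = 0"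
proof -
  have "cross2 g u \<ge> 0" "cross2 g v \<ge> 0" "cross2 g w \<ge> 0"
    using assms(1-3) halfplane_dir_cross2_nonneg by auto
  with assms(4-6) have "cross2 u v * cross2 g w \<ge> 0" "cross2 v w * cross2 g u \<ge> 0"
      "cross2 w u * cross2 g v \<ge> 0"
    by simp_all
  with cross2_plucker[of u v g w] show ?thesis by linarith
qed

lemma halfplane_cross2_less_trans:
  assumes "halfplane_dir g u" "halfplane_dir g v" "halfplane_dir g w"
    and "cross2 u v > 0" "cross2 v w > 0"
  shows "cross2 u w > 0"
proof (rule ccontr)
  assume "\<not> ?thesis"
  then have "cross2 w u \<ge> 0" using cross2_antisym[of w u] by simp
  with assms halfplane_cross2_cycle[of g u v w] have "cross2 g u = 0" by simp
  with halfplane_dir_opposite_max[OF assms(1) _ assms(2)] assms(4) show False by simp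
qed

lemma halfplane_cross2_eq_less_trans:
  assumes "halfplane_dir g u" "halfplane_dir g v" "halfplane_dir g w"
    and "cross2 u v = 0" "cross2 v w > 0"
  shows "cross2 u w > 0"
proof (rule ccontr)
  assume "\<not> ?thesis"
  then have "cross2 w u \<ge> 0" using cross2_antisym[of w u] by simp
  with assms halfplane_cross2_cycle[of g u v w] have "cross2 g u = 0" by simp
  then have "cross2 g v = 0" using halfplane_dir_opposite_parallel assms(1,4) by blast
  with halfplane_dir_opposite_max[OF assms(2) _ assms(3)] assms(5) show False by simp
qed

section \<open>Supporting lines and antipodal sides\<close>

definition supporting_line :: "nat \<Rightarrow> (nat \<Rightarrow> real^2) \<Rightarrow> real^2 \<Rightarrow> real^2 \<Rightarrow> bool" where
  "supporting_line k p c e \<longleftrightarrow>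
     (\<forall>q<k. cross2 e (p q - c) \<le> 0) \<or> (\<forall>q<k. cross2 e (p q - c) \<ge> 0)"

definition antipodal_sides ::
    "(real^2 \<Rightarrow> real^2 \<Rightarrow> bool) \<Rightarrow> real^2 \<Rightarrow> real^2 \<Rightarrow> real^2 \<Rightarrow> real^2 \<Rightarrow> bool" where
  "antipodal_sides S a b c d \<longleftrightarrow>
     parallel_vec (b - a) (d - c) \<or> (c = d \<and> a \<noteq> b \<and> S c (b - a)) \<or> (a = b \<and> c \<noteq> d \<and> S a (d - c))"

definition antipodal_listing :: "nat \<Rightarrow> (nat \<Rightarrow> real^2) \<Rightarrow> nat \<Rightarrow> (nat \<Rightarrow> nat) \<Rightarrow> bool" where
  "antipodal_listing k p n \<sigma> \<longleftrightarrow> mono_on {..<2*n} \<sigma> \<and> \<sigma> ` {..<2*n} = {..<k} \<and>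
     (\<forall>i<n. antipodal_sides (supporting_line k p)
        (p (\<sigma> i)) (p (\<sigma> ((i+1) mod (2*n)))) (p (\<sigma> (i+n))) (p (\<sigma> ((i+n+1) mod (2*n)))))"

lemma supporting_line_avoids_interior:
  assumes e: "e \<noteq> 0" and supp: "supporting_line k p c e"
  shows "line_dir c e \<inter> polygon_interior k p = {}"
proof -
  define w :: "real^2" where "w = vector [- e$2, e$1]"
  have w: "inner w x = cross2 e x" for x
    by (simp add: w_def inner_vec2 cross2_def)
  have "w \<noteq> 0" using e by (auto simp: w_def vec2_eq_iff)
  have line: "inner w x = inner w c" if "x \<in> line_dir c e" for x
    using that by (auto simp: line_dir_def w cross2_add cross2_scaleR)
  from supp show ?thesis
    unfolding supporting_line_def
  proof (elim disjE)
    assume "\<forall>q<k. cross2 e (p q - c) \<le> 0"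
    then have "p ` {..<k} \<subseteq> {x. inner w x \<le> inner w c}" by (auto simp: w cross2_diff)
    then have "convex hull (p ` {..<k}) \<subseteq> {x. inner w x \<le> inner w c}"
      by (intro hull_minimal) (auto simp: convex_halfspace_le)
    then have "polygon_interior k p \<subseteq> {x. inner w x < inner w c}"
      unfolding polygon_interior_def using interior_mono interior_halfspace_le[OF \<open>w \<noteq> 0\<close>] by blast
    then show ?thesis using line by fastforce
  next
    assume "\<forall>q<k. cross2 e (p q - c) \<ge> 0"
    then have "p ` {..<k} \<subseteq> {x. inner w x \<ge> inner w c}" by (auto simp: w cross2_diff)
    then have "convex hull (p ` {..<k}) \<subseteq> {x. inner w x \<ge> inner w c}"
      by (intro hull_minimal) (auto simp: convex_halfspace_ge)
    then have "polygon_interior k p \<subseteq> {x. inner w x > inner w c}"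
      unfolding polygon_interior_def using interior_mono interior_halfspace_ge[OF \<open>w \<noteq> 0\<close>] by blast
    then show ?thesis using line by fastforce
  qed
qed

lemma antipodal_sides_mono:
  assumes "\<And>c e. e \<noteq> 0 \<Longrightarrow> S c e \<Longrightarrow> S' c e" "antipodal_sides S a b c d"
  shows "antipodal_sides S' a b c d"
  using assms by (auto simp: antipodal_sides_def)

text \<open>Swapping the coordinates is an orientation-reversing isometry; it turns a clockwise
  polygon into a counterclockwise one without changing the order of the vertices.\<close>

definition swap_coords :: "real^2 \<Rightarrow> real^2" where
  "swap_coords x = vector [x$2, x$1]"

lemma swap_coords_nth [simp]: "swap_coords x $ 1 = x $ 2" "swap_coords x $ 2 = x $ 1"
  by (simp_all add: swap_coords_def)

lemma swap_coords_swap_coords [simp]: "swap_coords (swap_coords x) = x"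
  by (simp add: vec2_eq_iff)

lemma swap_coords_diff: "swap_coords (x - y) = swap_coords x - swap_coords y"
  by (simp add: vec2_eq_iff)

lemma swap_coords_eq_iff [simp]: "swap_coords x = swap_coords y \<longleftrightarrow> x = y"
  by (metis swap_coords_swap_coords)

lemma swap_coords_eq_0_iff [simp]: "swap_coords x = 0 \<longleftrightarrow> x = 0"
  by (auto simp: vec2_eq_iff)

lemma cross2_swap_coords: "cross2 (swap_coords u) (swap_coords v) = - cross2 u v"
  by (simp add: cross2_def)

lemma parallel_vec_swap_coords: "parallel_vec (swap_coords u) (swap_coords v) \<longleftrightarrow> parallel_vec u v"
proof -
  have "swap_coords (c *\<^sub>R v) = c *\<^sub>R swap_coords v" for c by (simp add: vec2_eq_iff)
  then have "(\<exists>c. swap_coords u = c *\<^sub>R swap_coords v) \<longleftrightarrow> (\<exists>c. u = c *\<^sub>R v)"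
    by (metis swap_coords_eq_iff)
  then show ?thesis by (simp add: parallel_vec_def)
qed

lemma num_parallel_pairs_swap_coords: "num_parallel_pairs k (swap_coords \<circ> p) = num_parallel_pairs k p"
proof -
  have "side_vec k (swap_coords \<circ> p) a = swap_coords (side_vec k p a)" for a
    by (simp add: side_vec_def swap_coords_diff)
  then show ?thesis by (simp add: num_parallel_pairs_def parallel_vec_swap_coords)
qed

lemma supporting_line_swap_coords:
  assumes "supporting_line k (swap_coords \<circ> p) c e"
  shows "supporting_line k p (swap_coords c) (swap_coords e)"
proof -
  have "cross2 (swap_coords e) (p q - swap_coords c) = - cross2 e (swap_coords (p q) - c)" for q
    by (metis cross2_swap_coords swap_coords_diff swap_coords_swap_coords)
  then show ?thesis using assms by (auto simp: supporting_line_def)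
qed

lemma antipodal_listing_swap_coords:
  assumes "antipodal_listing k (swap_coords \<circ> p) n \<sigma>"
  shows "antipodal_listing k p n \<sigma>"
proof -
  have swap: "antipodal_sides (supporting_line k p)
      (swap_coords a) (swap_coords b) (swap_coords c) (swap_coords d)"
    if "antipodal_sides (supporting_line k (swap_coords \<circ> p)) a b c d" for a b c d
    using that supporting_line_swap_coords[of k p]
    by (auto simp: antipodal_sides_def swap_coords_diff[symmetric] parallel_vec_swap_coords)
  have "antipodal_sides (supporting_line k p)
      (p (\<sigma> i)) (p (\<sigma> ((i+1) mod (2*n)))) (p (\<sigma> (i+n))) (p (\<sigma> ((i+n+1) mod (2*n))))"
    if "i < n" for i
    using swap assms that unfolding antipodal_listing_def by fastforce
  then show ?thesis using assms by (simp add: antipodal_listing_def)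
qed

section \<open>Counterclockwise polygons\<close>

locale ccw_polygon =
  fixes k :: nat and p :: "nat \<Rightarrow> real^2"
  assumes three_le: "3 \<le> k"
    and ccw: "\<And>i l. i < k \<Longrightarrow> l < k \<Longrightarrow> l \<noteq> i \<Longrightarrow> l \<noteq> (i+1) mod k \<Longrightarrow>
      cross2 (p ((i+1) mod k) - p i) (p l - p i) > 0"
begin

abbreviation side :: "nat \<Rightarrow> real^2" where
  "side \<equiv> side_vec k p"

lemma side_eq: "side i = p (Suc i mod k) - p i"
  by (simp add: side_vec_def)

lemma cross2_side_vertex_pos:
  "i < k \<Longrightarrow> l < k \<Longrightarrow> l \<noteq> i \<Longrightarrow> l \<noteq> Suc i mod k \<Longrightarrow> cross2 (side i) (p l - p i) > 0"
  using ccw by (simp add: side_eq)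

lemma cross2_side_vertex_nonneg: "i < k \<Longrightarrow> l < k \<Longrightarrow> cross2 (side i) (p l - p i) \<ge> 0"
  using cross2_side_vertex_pos[of i l] by (cases "l = i \<or> l = Suc i mod k") (auto simp: side_eq cross2_def)

lemma cross2_side_Suc_pos:
  assumes "i < k"
  shows "cross2 (side i) (side (Suc i mod k)) > 0"
proof -
  define l where "l = Suc (Suc i) mod k"
  have "l \<noteq> i" using Suc_Suc_mod_neq[OF assms three_le] by (simp add: l_def)
  moreover have "l \<noteq> Suc i mod k"
    using Suc_mod_neq[of "Suc i mod k" k] three_le by (simp add: l_def mod_Suc_eq)
  moreover have "l < k" using three_le by (simp add: l_def)
  ultimately have "cross2 (side i) (p l - p i) > 0"
    using cross2_side_vertex_pos[OF assms] by blast
  moreover have "p l - p i = side (Suc i mod k) + side i"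
    by (simp add: side_eq l_def mod_Suc_eq)
  ultimately show ?thesis by (simp add: cross2_add)
qed

lemma side_nonzero: "i < k \<Longrightarrow> side i \<noteq> 0"
  using cross2_side_Suc_pos[of i] by (auto simp: cross2_def)

lemma vertex_cone_support:
  assumes a: "a < k" and q: "q < k"
    and u: "cross2 u (side a) \<le> 0" "cross2 u (side (Suc a mod k)) \<ge> 0"
  shows "cross2 u (p q - p (Suc a mod k)) \<ge> 0"
proof -
  define c where "c = Suc a mod k"
  define z where "z = p q - p c"
  have ck: "c < k" using a by (simp add: c_def)
  have "cross2 (side a) z = cross2 (side a) (p q - p a)"
    by (simp add: z_def side_eq c_def cross2_def algebra_simps)
  then have az: "cross2 (side a) z \<ge> 0" using cross2_side_vertex_nonneg[OF a q] by simp
  have cz: "cross2 (side c) z \<ge> 0" using cross2_side_vertex_nonneg[OF ck q] by (simp add: z_def)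
  have "cross2 (side a) z * cross2 u (side c) \<ge> 0" using az u(2) by (simp add: c_def)
  moreover have "cross2 (side c) z * cross2 u (side a) \<le> 0"
    using cz u(1) by (simp add: mult_nonneg_nonpos)
  ultimately have "cross2 (side a) (side c) * cross2 u z \<ge> 0"
    using cross2_plucker[of "side a" "side c" u z] unfolding cross2_antisym[of z "side a"]
    by linarith
  then show ?thesis
    using cross2_side_Suc_pos[OF a] by (simp add: z_def c_def zero_le_mult_iff)
qed

lemma parallel_sides_opposite:
  assumes "a < k" "b < k" "a \<noteq> b" "cross2 (side a) (side b) = 0"
  shows "inner (side a) (side b) < 0"
proof -
  have adjacent: "b = Suc a mod k"
    if ab: "a < k" "b < k" "a \<noteq> b" "cross2 (side a) (side b) = 0" "inner (side a) (side b) \<ge> 0"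
    for a b
  proof (rule ccontr)
    assume "b \<noteq> Suc a mod k"
    then have pos: "cross2 (side a) (p b - p a) > 0" using cross2_side_vertex_pos ab by simp
    have "inner (side b) (side b) * cross2 (side a) (p b - p a) =
        inner (side b) (side a) * cross2 (side b) (p b - p a)"
      using inner_cross2_expand[of "side b" "side a" "p b - p a"] ab(4) cross2_antisym[of "side b"]
      by simp
    also have "\<dots> \<le> 0"
      using cross2_side_vertex_nonneg[OF ab(2,1)] ab(5)
      by (simp add: cross2_diff inner_commute mult_nonneg_nonpos)
    finally show False
      using pos side_nonzero[OF ab(2)] by (smt (verit) inner_gt_zero_iff mult_pos_pos)
  qed
  show ?thesis
  proof (rule ccontr)
    assume "\<not> ?thesis"
    then have ab: "b = Suc a mod k" and ba: "a = Suc b mod k"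
      using adjacent[of a b] adjacent[of b a] assms cross2_antisym[of "side b"]
      by (auto simp: inner_commute)
    have "Suc (Suc a) mod k = Suc (Suc a mod k) mod k" by (simp add: mod_Suc_eq)
    also have "\<dots> = a" using ab ba by simp
    finally show False using Suc_Suc_mod_neq assms(1) three_le by metis
  qed
qed

abbreviation last_side :: "real^2" where
  "last_side \<equiv> side (k - 1)"

text \<open>The boundary splits into a lower chain of sides \<open>0 .. split_index - 1\<close>, whose directions
  lie within angle \<open>(0, \<pi>]\<close> of the last side, and an upper chain \<open>split_index .. k - 1\<close>,
  whose negated directions do. Within each chain the directions are sorted by angle.\<close>

definition split_index :: nat where
  "split_index = (LEAST t. cross2 last_side (side t) < 0)"

lemma cross2_last_side_0: "cross2 last_side (side 0) > 0"
  using cross2_side_Suc_pos[of "k - 1"] three_le by simp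

lemma cross2_last_side_before: "cross2 last_side (side (k - 2)) < 0"
proof -
  have "Suc (k - 2) = k - 1" using three_le by simp
  then have "cross2 (side (k - 2)) last_side > 0"
    using cross2_side_Suc_pos[of "k - 2"] three_le by simp
  then show ?thesis using cross2_antisym[of last_side] by simp
qed

lemma cross2_last_side_split: "cross2 last_side (side split_index) < 0"
  unfolding split_index_def by (rule LeastI, rule cross2_last_side_before)

lemma split_index_bounds: "1 \<le> split_index" "split_index \<le> k - 2"
proof -
  show "split_index \<le> k - 2"
    unfolding split_index_def by (rule Least_le, rule cross2_last_side_before)
  show "1 \<le> split_index"
    using cross2_last_side_split cross2_last_side_0 by (cases split_index) auto
qed

lemma split_index_less: "split_index < k"
  using split_index_bounds(2) three_le by linarith

lemma cross2_last_side_lower: "t < split_index \<Longrightarrow> cross2 last_side (side t) \<ge> 0"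
  unfolding split_index_def using not_less_Least by fastforce

lemma cross2_last_side_upper:
  assumes "split_index \<le> t" "t \<le> k - 2"
  shows "cross2 last_side (side t) < 0"
  using assms
proof (induction t rule: nat_induct_at_least)
  case base
  then show ?case using cross2_last_side_split by simp
next
  case (Suc t)
  have prev: "cross2 last_side (side t) < 0" using Suc by simp
  have t: "t < k" "Suc t < k" "Suc t mod k = Suc t" using Suc.prems three_le by auto
  show ?case
  proof (rule ccontr)
    assume "\<not> ?case"
    then have "cross2 last_side (p (k - 1) - p (Suc t)) \<ge> 0"
      using vertex_cone_support[OF t(1), of "k - 1" last_side] prev t(3) three_le by simp
    moreover have "cross2 last_side (p (Suc t) - p (k - 1)) > 0"
      using cross2_side_vertex_pos[of "k - 1" "Suc t"] Suc.prems three_le by simp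
    ultimately show False by (simp add: cross2_def algebra_simps)
  qed
qed

lemma last_side_nonzero: "last_side \<noteq> 0"
  using side_nonzero three_le by simp

lemma halfplane_dir_lower:
  assumes "t < split_index"
  shows "halfplane_dir last_side (side t)"
proof -
  have t: "t < k" "t \<noteq> k - 1" using assms split_index_bounds three_le by auto
  show ?thesis
  proof (cases "cross2 last_side (side t) = 0")
    case True
    then have "inner (side t) last_side < 0"
      using parallel_sides_opposite[OF t(1) _ t(2)] three_le cross2_antisym[of "side t"] by simp
    then show ?thesis using True by (simp add: halfplane_dir_def inner_commute)
  next
    case False
    then show ?thesis using cross2_last_side_lower[OF assms] by (simp add: halfplane_dir_def)
  qed
qed

lemma halfplane_dir_upper:
  assumes "split_index \<le> l" "l < k"
  shows "halfplane_dir last_side (- side l)"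
proof (cases "l = k - 1")
  case True
  then show ?thesis using last_side_nonzero by (simp add: halfplane_dir_def)
next
  case False
  then show ?thesis
    using cross2_last_side_upper[OF assms(1)] assms(2) by (simp add: halfplane_dir_def)
qed

lemma lower_sides_sorted: "a < b \<Longrightarrow> b < split_index \<Longrightarrow> cross2 (side a) (side b) > 0"
proof (induction b)
  case 0
  then show ?case by simp
next
  case (Suc b)
  have turn: "cross2 (side b) (side (Suc b)) > 0"
    using cross2_side_Suc_pos[of b] Suc.prems split_index_less by simp
  show ?case
  proof (cases "a = b")
    case False
    then have "cross2 (side a) (side b) > 0" using Suc by simp
    with turn show ?thesis
      using halfplane_cross2_less_trans[OF halfplane_dir_lower[of a] halfplane_dir_lower[of b]
          halfplane_dir_lower[of "Suc b"]] Suc.prems by simp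
  qed (use turn in simp)
qed

lemma upper_sides_sorted:
  "split_index \<le> a \<Longrightarrow> a < b \<Longrightarrow> b < k \<Longrightarrow> cross2 (side a) (side b) > 0"
proof (induction b)
  case 0
  then show ?case by simp
next
  case (Suc b)
  have turn: "cross2 (side b) (side (Suc b)) > 0"
    using cross2_side_Suc_pos[of b] Suc.prems by simp
  show ?case
  proof (cases "a = b")
    case False
    then have "cross2 (side a) (side b) > 0" using Suc by simp
    with turn have "cross2 (- side a) (- side (Suc b)) > 0"
      using halfplane_cross2_less_trans[OF halfplane_dir_upper halfplane_dir_upper halfplane_dir_upper,
          of a b "Suc b"] Suc.prems by simp
    then show ?thesis by simp
  qed (use turn in simp)
qed
section \<open>Merging the two chains\<close>

text \<open>The two chains are merged by angle, as in the rotating calipers: in state \<open>(i, l)\<close> the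
  lower side \<open>i\<close> and the upper side \<open>l\<close> are current, and the one whose direction comes first is
  passed; both are passed when they are parallel.\<close>

fun merge_parallel :: "nat \<times> nat \<Rightarrow> bool" where
  "merge_parallel (i, l) \<longleftrightarrow> i < split_index \<and> l < k \<and> cross2 (side i) (side l) = 0"

fun merge_step :: "nat \<times> nat \<Rightarrow> nat \<times> nat" where
  "merge_step (i, l) =
    (if merge_parallel (i, l) then (Suc i, Suc l)
     else if i < split_index \<and> cross2 (side i) (side l) < 0 then (Suc i, l)
     else (i, Suc l))"

text \<open>Each direction already passed precedes the current direction of the other chain.\<close>

fun merge_inv :: "nat \<times> nat \<Rightarrow> bool" where
  "merge_inv (i, l) \<longleftrightarrow>
     i \<le> split_index \<and> split_index \<le> l \<and> l \<le> k \<and> (l = k \<longrightarrow> i = split_index) \<and>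
     (0 < i \<and> l < k \<longrightarrow> cross2 (side (i - 1)) (side l) < 0) \<and>
     (split_index < l \<and> i < split_index \<longrightarrow> cross2 (side i) (side (l - 1)) > 0)"

lemma merge_inv_parallel_step:
  assumes inv: "merge_inv (i, l)" and parallel: "merge_parallel (i, l)"
  shows "merge_inv (Suc i, Suc l)"
proof -
  let ?m = split_index
  have i: "i < ?m" and l: "?m \<le> l" "l < k" and il: "cross2 (side i) (side l) = 0"
    using inv parallel by auto
  have Hi: "halfplane_dir last_side (side i)" using halfplane_dir_lower[OF i] .
  have Hl: "halfplane_dir last_side (- side l)" using halfplane_dir_upper[OF l] .
  have "Suc i = ?m" if "Suc l = k"
  proof (rule ccontr)
    assume "Suc i \<noteq> ?m"
    then have "i < ?m - 1" using i by simp
    then have "cross2 (side i) (side (?m - 1)) > 0" using lower_sides_sorted split_index_bounds by simp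
    moreover have "l = k - 1" using that by simp
    then have "cross2 last_side (side i) = 0" using il cross2_antisym[of last_side] by simp
    then have "cross2 (side i) (side (?m - 1)) \<le> 0"
      using halfplane_dir_opposite_max[OF Hi _ halfplane_dir_lower, of "?m - 1"] split_index_bounds
      by simp
    ultimately show False by simp
  qed
  moreover have "cross2 (side i) (side (Suc l)) < 0" if "Suc l < k"
  proof -
    have "cross2 (- side l) (- side (Suc l)) > 0"
      using cross2_side_Suc_pos[of l] that by simp
    then have "cross2 (side i) (- side (Suc l)) > 0"
      using halfplane_cross2_eq_less_trans[OF Hi Hl halfplane_dir_upper] il that l by simp
    then show ?thesis by simp
  qed
  moreover have "cross2 (side (Suc i)) (side l) > 0" if "Suc i < ?m"
  proof -
    have "cross2 (side i) (side (Suc i)) > 0" using lower_sides_sorted that by simp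
    moreover have "cross2 (- side l) (side i) = 0" using il cross2_antisym[of "side l"] by simp
    ultimately have "cross2 (- side l) (side (Suc i)) > 0"
      using halfplane_cross2_eq_less_trans[OF Hl Hi halfplane_dir_lower[OF that]] by simp
    then show ?thesis using cross2_antisym[of "side l"] by simp
  qed
  ultimately show ?thesis using i l by auto
qed

lemma merge_inv_lower_step:
  assumes inv: "merge_inv (i, l)" and l: "l < k"
    and i: "i < split_index" and il: "cross2 (side i) (side l) < 0"
  shows "merge_inv (Suc i, l)"
proof -
  have "cross2 (side (Suc i)) (side (l - 1)) > 0" if "split_index < l" "Suc i < split_index"
  proof -
    have "cross2 (side i) (side (Suc i)) > 0" using lower_sides_sorted that by simp
    moreover have "cross2 (- side (l - 1)) (side i) > 0"
      using inv i that cross2_antisym[of "side (l - 1)"] by simp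
    ultimately have "cross2 (- side (l - 1)) (side (Suc i)) > 0"
      using halfplane_cross2_less_trans[OF halfplane_dir_upper halfplane_dir_lower
          halfplane_dir_lower[OF that(2)], of "l - 1" i] i that l by simp
    then show ?thesis using cross2_antisym[of "side (l - 1)"] by simp
  qed
  then show ?thesis using inv i l il by auto
qed

lemma merge_inv_upper_step:
  assumes inv: "merge_inv (i, l)" and l: "l < k"
    and upper_first: "\<not> merge_parallel (i, l)" "\<not> (i < split_index \<and> cross2 (side i) (side l) < 0)"
  shows "merge_inv (i, Suc l)"
proof -
  have im: "i \<le> split_index" and ml: "split_index \<le> l" using inv by simp_all
  have gt: "cross2 (side i) (side l) > 0" if "i < split_index" using upper_first that l by auto
  have "i = split_index" if "Suc l = k"
  proof (rule ccontr)
    assume "i \<noteq> split_index"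
    then have "i < split_index" using im by simp
    then have "cross2 (side i) last_side > 0" "cross2 last_side (side i) \<ge> 0"
      using gt that cross2_last_side_lower by auto
    then show False using cross2_antisym[of last_side] by simp
  qed
  moreover have "cross2 (side (i - 1)) (side (Suc l)) < 0" if "0 < i" "Suc l < k"
  proof -
    have "cross2 (side (i - 1)) (- side l) > 0" using inv l that by simp
    moreover have "cross2 (- side l) (- side (Suc l)) > 0"
      using cross2_side_Suc_pos[of l] that by simp
    ultimately have "cross2 (side (i - 1)) (- side (Suc l)) > 0"
      using halfplane_cross2_less_trans[OF halfplane_dir_lower halfplane_dir_upper[OF ml l]
          halfplane_dir_upper, of "i - 1"] that im ml by simp
    then show ?thesis by simp
  qed
  ultimately show ?thesis using inv gt l by auto
qed

lemma merge_inv_step: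
  assumes inv: "merge_inv (i, l)" and not_end: "(i, l) \<noteq> (split_index, k)"
  shows "merge_inv (merge_step (i, l))"
proof -
  have l: "l < k" using inv not_end by auto
  consider (parallel) "merge_parallel (i, l)"
    | (lower_first) "\<not> merge_parallel (i, l)" "i < split_index" "cross2 (side i) (side l) < 0"
    | (upper_first) "\<not> merge_parallel (i, l)" "\<not> (i < split_index \<and> cross2 (side i) (side l) < 0)"
    by blast
  then show ?thesis
  proof cases
    case parallel
    then show ?thesis using merge_inv_parallel_step[OF inv] by simp
  next
    case lower_first
    then show ?thesis using merge_inv_lower_step[OF inv l] by simp
  next
    case upper_first
    then have "merge_step (i, l) = (i, Suc l)"
      by (simp only: merge_step.simps if_not_P if_False)
    then show ?thesis using merge_inv_upper_step[OF inv l upper_first] by simp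
  qed
qed

definition merge_state :: "nat \<Rightarrow> nat \<times> nat" where
  "merge_state t = (merge_step ^^ t) (0, split_index)"

lemma merge_state_0: "merge_state 0 = (0, split_index)"
  by (simp add: merge_state_def)

lemma merge_state_Suc: "merge_state (Suc t) = merge_step (merge_state t)"
  by (simp add: merge_state_def)

lemma merge_step_sum:
  "fst (merge_step s) + snd (merge_step s) = fst s + snd s + 1 + (if merge_parallel s then 1 else 0)"
  by (cases s) simp

lemma merge_step_fst: "fst (merge_step s) = fst s \<or> fst (merge_step s) = Suc (fst s)"
  by (cases s) simp

lemma merge_step_snd: "snd (merge_step s) = snd s \<or> snd (merge_step s) = Suc (snd s)"
  by (cases s) simp

lemma merge_sum:
  "fst (merge_state t) + snd (merge_state t) =
     split_index + t + card {s. s < t \<and> merge_parallel (merge_state s)}"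
proof (induction t)
  case 0
  then show ?case by (simp add: merge_state_0)
next
  case (Suc t)
  have "{s. s < Suc t \<and> merge_parallel (merge_state s)} =
      {s. s < t \<and> merge_parallel (merge_state s)} \<union> (if merge_parallel (merge_state t) then {t} else {})"
    by (auto simp: less_Suc_eq)
  then have "card {s. s < Suc t \<and> merge_parallel (merge_state s)} =
      card {s. s < t \<and> merge_parallel (merge_state s)} + (if merge_parallel (merge_state t) then 1 else 0)"
    by simp
  with Suc show ?case using merge_step_sum[of "merge_state t"] by (simp add: merge_state_Suc)
qed

lemma merge_inv_before_end:
  "(\<And>s. s < t \<Longrightarrow> merge_state s \<noteq> (split_index, k)) \<Longrightarrow> merge_inv (merge_state t)"
proof (induction t)
  case 0
  then show ?case using split_index_less by (simp add: merge_state_0)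
next
  case (Suc t)
  then show ?case
    using merge_inv_step[of "fst (merge_state t)" "snd (merge_state t)"] by (simp add: merge_state_Suc)
qed

lemma merge_reaches_end: "\<exists>t. merge_state t = (split_index, k)"
proof (rule ccontr)
  assume "\<nexists>t. merge_state t = (split_index, k)"
  then have "merge_inv (merge_state (Suc k))" using merge_inv_before_end by blast
  then have "fst (merge_state (Suc k)) + snd (merge_state (Suc k)) \<le> split_index + k"
    by (cases "merge_state (Suc k)") auto
  then show False using merge_sum[of "Suc k"] by simp
qed

definition merge_length :: nat where
  "merge_length = (LEAST t. merge_state t = (split_index, k))"

lemma merge_length_end: "merge_state merge_length = (split_index, k)"
  unfolding merge_length_def using merge_reaches_end by (rule LeastI_ex)

lemma merge_before_end: "t < merge_length \<Longrightarrow> merge_state t \<noteq> (split_index, k)"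
  unfolding merge_length_def using not_less_Least by blast

lemma merge_inv_upto: "t \<le> merge_length \<Longrightarrow> merge_inv (merge_state t)"
  using merge_inv_before_end merge_before_end by simp

lemma merge_bounds:
  "t < merge_length \<Longrightarrow>
     fst (merge_state t) \<le> split_index \<and> split_index \<le> snd (merge_state t) \<and> snd (merge_state t) < k"
  using merge_inv_upto[of t] merge_before_end[of t] by (cases "merge_state t") auto

definition parallel_steps :: "nat set" where
  "parallel_steps = {t. t < merge_length \<and> merge_parallel (merge_state t)}"

lemma merge_length_parallel_steps: "merge_length + card parallel_steps = k"
  using merge_sum[of merge_length] merge_length_end unfolding parallel_steps_def by simp

lemma merge_sum_strict_mono:
  assumes "s < t"
  shows "fst (merge_state s) + snd (merge_state s) < fst (merge_state t) + snd (merge_state t)"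
proof -
  have "card {x. x < s \<and> merge_parallel (merge_state x)} \<le> card {x. x < t \<and> merge_parallel (merge_state x)}"
    using assms by (intro card_mono) auto
  then show ?thesis unfolding merge_sum using assms by linarith
qed

lemma inj_merge_state: "inj merge_state"
proof (rule injI)
  fix s t assume "merge_state s = merge_state t"
  then show "s = t"
    using merge_sum_strict_mono[of s t] merge_sum_strict_mono[of t s] by (metis less_irrefl nat_neq_iff)
qed

lemma mono_merge_fst: "mono (\<lambda>t. fst (merge_state t))"
  by (rule mono_iff_le_Suc[THEN iffD2]) (metis merge_state_Suc merge_step_fst le_SucI order_refl)

lemma mono_merge_snd: "mono (\<lambda>t. snd (merge_state t))"
  by (rule mono_iff_le_Suc[THEN iffD2]) (metis merge_state_Suc merge_step_snd le_SucI order_refl)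

lemma lower_side_passed:
  assumes a: "a < split_index"
  obtains t l where "t < merge_length" "merge_state t = (a, l)"
    "merge_parallel (a, l) \<or> cross2 (side a) (side l) < 0"
proof -
  obtain t where t: "t < merge_length" "fst (merge_state t) = a" "fst (merge_state (Suc t)) = Suc a"
    using discrete_ivt[of merge_length "\<lambda>t. fst (merge_state t)" a] merge_step_fst
      merge_length_end a by (auto simp: merge_state_0 merge_state_Suc)
  define l where "l = snd (merge_state t)"
  have state: "merge_state t = (a, l)" using t(2) by (simp add: l_def prod_eq_iff)
  moreover have "merge_parallel (a, l) \<or> cross2 (side a) (side l) < 0"
    using t(3) state by (auto simp: merge_state_Suc split: if_splits)
  ultimately show ?thesis using that t(1) by blast
qed

lemma parallel_pair_visited:
  assumes a: "a < split_index" and b: "split_index \<le> b" "b < k"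
    and ab: "cross2 (side a) (side b) = 0"
  shows "\<exists>t<merge_length. merge_state t = (a, b) \<and> merge_parallel (a, b)"
proof -
  obtain t l where t: "t < merge_length" and state: "merge_state t = (a, l)"
    and advance: "merge_parallel (a, l) \<or> cross2 (side a) (side l) < 0"
    using lower_side_passed[OF a] .
  have inv: "merge_inv (a, l)" using merge_inv_upto[of t] t state by simp
  have l: "split_index \<le> l" "l < k" using merge_bounds[OF t] state by simp_all
  have Ha: "halfplane_dir last_side (side a)" using halfplane_dir_lower[OF a] .
  have Hb: "halfplane_dir last_side (- side b)" using halfplane_dir_upper[OF b] .
  have "l = b"
  proof (rule ccontr)
    assume "l \<noteq> b"
    then consider "l < b" | "b < l" by linarith
    then show False
    proof cases
      case 1
      have "cross2 (- side l) (- side b) > 0" using upper_sides_sorted[of l b] l 1 b by simp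
      moreover have "cross2 (side a) (- side l) = 0 \<or> cross2 (side a) (- side l) > 0"
        using advance by auto
      ultimately have "cross2 (side a) (- side b) > 0"
        using halfplane_cross2_eq_less_trans[OF Ha halfplane_dir_upper[OF l] Hb]
          halfplane_cross2_less_trans[OF Ha halfplane_dir_upper[OF l] Hb] by auto
      then show False using ab by simp
    next
      case 2
      then have "cross2 (- side (l - 1)) (side a) > 0"
        using inv a b cross2_antisym[of "side (l - 1)"] by simp
      moreover have "b = l - 1 \<or> b < l - 1" using 2 by linarith
      then have "b = l - 1 \<or> cross2 (- side b) (- side (l - 1)) > 0"
        using upper_sides_sorted[of b "l - 1"] b l(2) by (auto simp: less_imp_diff_less)
      ultimately have "cross2 (- side b) (side a) > 0"
        using halfplane_cross2_less_trans[OF Hb halfplane_dir_upper Ha, of "l - 1"] 2 b l by auto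
      then show False using ab cross2_antisym[of "side b"] by simp
    qed
  qed
  then show ?thesis using t state a b ab by auto
qed

lemma parallel_side_pairs_eq:
  "{(a, b). a < b \<and> b < k \<and> parallel_vec (side a) (side b)} = merge_state ` parallel_steps"
proof (intro equalityI subsetI)
  fix s assume "s \<in> merge_state ` parallel_steps"
  then obtain t where t: "t < merge_length" "merge_parallel (merge_state t)" "s = merge_state t"
    by (auto simp: parallel_steps_def)
  obtain a b where s: "s = (a, b)" by fastforce
  have "merge_state t = (a, b)" using t(3) s by simp
  then have "a < split_index" "split_index \<le> b" "b < k" "cross2 (side a) (side b) = 0"
    using t(2) merge_bounds[OF t(1)] by auto
  then show "s \<in> {(a, b). a < b \<and> b < k \<and> parallel_vec (side a) (side b)}"
    using cross2_eq_0_parallel[of "side a" "side b"] side_nonzero split_index_less s by auto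
next
  fix s assume "s \<in> {(a, b). a < b \<and> b < k \<and> parallel_vec (side a) (side b)}"
  then obtain a b where s: "s = (a, b)" "a < b" "b < k" "parallel_vec (side a) (side b)"
    by auto
  have ab: "cross2 (side a) (side b) = 0" using parallel_vec_cross2 s(4) .
  have "a < split_index" using upper_sides_sorted[of a b] s ab by (cases "split_index \<le> a") auto
  moreover have "split_index \<le> b" using lower_sides_sorted[of a b] s ab by (cases "b < split_index") auto
  ultimately show "s \<in> merge_state ` parallel_steps"
    using parallel_pair_visited s(3) ab s(1) by (force simp: parallel_steps_def)
qed

lemma merge_length_eq: "merge_length = k - num_parallel_pairs k p"
proof -
  have "num_parallel_pairs k p = card (merge_state ` parallel_steps)"
    unfolding num_parallel_pairs_def parallel_side_pairs_eq ..
  also have "\<dots> = card parallel_steps"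
    using inj_merge_state by (simp add: card_image inj_on_subset)
  finally show ?thesis using merge_length_parallel_steps by simp
qed

lemma merge_lower_support:
  assumes inv: "merge_inv (i, l)" and i: "i < split_index" and l: "l < k"
    and il: "cross2 (side i) (side l) \<le> 0" and q: "q < k"
  shows "cross2 (side i) (p q - p l) \<le> 0"
proof -
  have ml: "split_index \<le> l" using inv by simp
  then have l1: "Suc (l - 1) mod k = l" using split_index_bounds l by simp
  have "cross2 (side i) (side (l - 1)) \<ge> 0"
  proof (cases "split_index < l")
    case True
    then show ?thesis using inv i by simp
  next
    case False
    then have "l = split_index" using ml by simp
    show ?thesis
    proof (cases "i = l - 1")
      case False
      then have "i < l - 1" using i \<open>l = split_index\<close> by linarith
      then show ?thesis using lower_sides_sorted[of i "l - 1"] \<open>l = split_index\<close> by simp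
    qed simp
  qed
  then have "cross2 (- side i) (p q - p (Suc (l - 1) mod k)) \<ge> 0"
    using vertex_cone_support[of "l - 1" q "- side i"] l q il l1 by simp
  then show ?thesis using l1 by simp
qed

lemma merge_upper_support:
  assumes inv: "merge_inv (i, l)" and l: "l < k"
    and il: "i = split_index \<or> cross2 (side i) (side l) \<ge> 0" and q: "q < k"
  shows "cross2 (side l) (p q - p i) \<le> 0"
proof -
  have im: "i \<le> split_index" and ml: "split_index \<le> l" using inv by simp_all
  define a where "a = (if i = 0 then k - 1 else i - 1)"
  have a: "a < k" "Suc a mod k = i"
    using im split_index_less three_le by (auto simp: a_def)
  have "cross2 (side l) (side a) \<ge> 0"
  proof (cases "i = 0")
    case True
    show ?thesis
    proof (cases "l = k - 1")
      case False
      then have "l < k - 1" using l by linarith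
      then show ?thesis using upper_sides_sorted[OF ml, of "k - 1"] \<open>i = 0\<close> by (simp add: a_def)
    qed (simp add: a_def \<open>i = 0\<close>)
  next
    case False
    then have "cross2 (side (i - 1)) (side l) < 0" using inv l by simp
    then show ?thesis using False cross2_antisym[of "side l"] by (simp add: a_def)
  qed
  moreover have "cross2 (side l) (side i) \<le> 0"
  proof (cases "i = split_index")
    case True
    then show ?thesis
      using upper_sides_sorted[of split_index l] ml l cross2_antisym[of "side l"]
      by (cases "l = split_index") auto
  next
    case False
    then show ?thesis using il cross2_antisym[of "side l"] by simp
  qed
  ultimately have "cross2 (- side l) (p q - p (Suc a mod k)) \<ge> 0"
    using vertex_cone_support[OF a(1) q, of "- side l"] a(2) by simp
  then show ?thesis using a(2) by simp
qed

lemma merge_step_antipodal: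
  assumes t: "t < merge_length" and state: "merge_state t = (i, l)"
  shows "antipodal_sides (supporting_line k p)
    (p i) (p (fst (merge_state (Suc t)))) (p l) (p (snd (merge_state (Suc t)) mod k))"
proof -
  have inv: "merge_inv (i, l)" using merge_inv_upto[of t] t state by simp
  have im: "i \<le> split_index" and l: "split_index \<le> l" "l < k"
    using merge_bounds[OF t] state by auto
  have next_state: "merge_state (Suc t) = merge_step (i, l)" using state by (simp add: merge_state_Suc)
  note merge_step.simps [simp del] merge_parallel.simps [simp del]
  have lower_side: "p (Suc i) - p i = side i" if "i < split_index"
    using that split_index_less by (simp add: side_eq)
  have upper_side: "p (Suc l mod k) - p l = side l" by (simp add: side_eq)
  consider (parallel) "merge_parallel (i, l)"
    | (lower_first) "\<not> merge_parallel (i, l)" "i < split_index" "cross2 (side i) (side l) < 0"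
    | (upper_first) "\<not> merge_parallel (i, l)" "\<not> (i < split_index \<and> cross2 (side i) (side l) < 0)"
    by blast
  then show ?thesis
  proof cases
    case parallel
    then have "parallel_vec (side i) (side l)"
      using cross2_eq_0_parallel[of "side i" "side l"] side_nonzero split_index_less
      by (auto simp: merge_parallel.simps)
    then show ?thesis
      using parallel next_state lower_side upper_side
      by (simp add: antipodal_sides_def merge_step.simps merge_parallel.simps)
  next
    case lower_first
    have "p (Suc i) \<noteq> p i"
      using lower_side[OF lower_first(2)] lower_first(2) split_index_less side_nonzero by force
    moreover have "supporting_line k p (p l) (side i)"
      using merge_lower_support[OF inv lower_first(2) l(2)] lower_first(3)
      by (simp add: supporting_line_def)
    moreover have "merge_state (Suc t) = (Suc i, l)"
      using lower_first next_state by (simp add: merge_step.simps)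
    ultimately show ?thesis
      using lower_side[OF lower_first(2)] l(2) by (simp add: antipodal_sides_def)
  next
    case upper_first
    then have "i = split_index \<or> cross2 (side i) (side l) \<ge> 0"
      using im l(2) by (auto simp: merge_parallel.simps)
    then have "supporting_line k p (p i) (side l)"
      using merge_upper_support[OF inv l(2)] by (simp add: supporting_line_def)
    moreover have "merge_state (Suc t) = (i, Suc l)"
      using upper_first next_state by (auto simp: merge_step.simps)
    ultimately show ?thesis
      using upper_side side_nonzero[OF l(2)] by (auto simp: antipodal_sides_def)
  qed
qed

definition vertex_index :: "nat \<Rightarrow> nat" where
  "vertex_index t =
     (if t < merge_length then fst (merge_state t) else snd (merge_state (t - merge_length)))"

lemma vertex_index_next_lower:
  assumes "t < merge_length"
  shows "vertex_index (Suc t mod (2 * merge_length)) = fst (merge_state (Suc t))"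
proof (cases "Suc t < merge_length")
  case False
  then have "Suc t = merge_length" using assms by simp
  then show ?thesis using merge_length_end by (simp add: vertex_index_def merge_state_0)
qed (simp add: vertex_index_def)

lemma vertex_index_next_upper:
  assumes "t < merge_length"
  shows "vertex_index (Suc (t + merge_length) mod (2 * merge_length)) = snd (merge_state (Suc t)) mod k"
proof (cases "Suc t < merge_length")
  case True
  then show ?thesis using merge_bounds[OF True] by (simp add: vertex_index_def)
next
  case False
  then have N: "Suc t = merge_length" using assms by simp
  then have "Suc (t + merge_length) = 2 * merge_length" by simp
  then have "Suc (t + merge_length) mod (2 * merge_length) = 0" by (simp only: mod_self)
  with N show ?thesis using merge_length_end by (simp add: vertex_index_def merge_state_0)
qed

lemma mono_on_vertex_index: "mono_on {..<2 * merge_length} vertex_index"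
proof (rule mono_onI)
  fix r s assume "r \<in> {..<2 * merge_length}" "s \<in> {..<2 * merge_length}" "r \<le> s"
  then show "vertex_index r \<le> vertex_index s"
    using mono_merge_fst mono_merge_snd merge_bounds[of r] monoD[OF mono_merge_snd, of 0 "s - merge_length"]
    by (auto simp: vertex_index_def merge_state_0 mono_def)
qed

lemma vertex_index_image: "vertex_index ` {..<2 * merge_length} = {..<k}"
proof (intro equalityI subsetI)
  fix v assume "v \<in> vertex_index ` {..<2 * merge_length}"
  then obtain t where "t < 2 * merge_length" "v = vertex_index t" by auto
  then show "v \<in> {..<k}"
    using merge_bounds[of t] merge_bounds[of "t - merge_length"] split_index_less
    by (auto simp: vertex_index_def)
next
  fix v assume v: "v \<in> {..<k}"
  show "v \<in> vertex_index ` {..<2 * merge_length}"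
  proof (cases "v < split_index")
    case True
    then obtain t where "t < merge_length" "fst (merge_state t) = v"
      using discrete_ivt[of merge_length "\<lambda>t. fst (merge_state t)" v] merge_step_fst merge_length_end
      by (auto simp: merge_state_0 merge_state_Suc)
    then show ?thesis by (intro image_eqI[of _ _ t]) (auto simp: vertex_index_def)
  next
    case False
    then obtain t where "t < merge_length" "snd (merge_state t) = v"
      using discrete_ivt[of merge_length "\<lambda>t. snd (merge_state t)" v] merge_step_snd merge_length_end v
      by (auto simp: merge_state_0 merge_state_Suc)
    then show ?thesis by (intro image_eqI[of _ _ "t + merge_length"]) (auto simp: vertex_index_def)
  qed
qed

lemma antipodal_listing_vertex_index:
  "antipodal_listing k p (k - num_parallel_pairs k p) vertex_index"
proof -
  have "antipodal_sides (supporting_line k p)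
      (p (vertex_index t)) (p (vertex_index (Suc t mod (2 * merge_length))))
      (p (vertex_index (t + merge_length)))
      (p (vertex_index (Suc (t + merge_length) mod (2 * merge_length))))"
    if "t < merge_length" for t
    using merge_step_antipodal[OF that, of "fst (merge_state t)" "snd (merge_state t)"]
      vertex_index_next_lower[OF that] vertex_index_next_upper[OF that] that
    by (simp add: vertex_index_def)
  then show ?thesis
    using mono_on_vertex_index vertex_index_image
    unfolding antipodal_listing_def merge_length_eq[symmetric] by simp
qed

end

lemma convex_polygon_antipodal_listing:
  assumes "convex_polygon k p"
  shows "\<exists>\<sigma>. antipodal_listing k p (k - num_parallel_pairs k p) \<sigma>"
proof -
  have k: "3 \<le> k" using assms by (simp add: convex_polygon_def)
  consider "ccw_polygon k p" | "ccw_polygon k (swap_coords \<circ> p)"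
    using assms k unfolding convex_polygon_def ccw_polygon_def
    by (auto simp: swap_coords_diff[symmetric] cross2_swap_coords)
  then show ?thesis
  proof cases
    case 1
    then show ?thesis using ccw_polygon.antipodal_listing_vertex_index by blast
  next
    case 2
    then show ?thesis
      using ccw_polygon.antipodal_listing_vertex_index antipodal_listing_swap_coords
        num_parallel_pairs_swap_coords by metis
  qed
qed

theorem lemma2p2:
  fixes k j n :: nat and p :: "nat \<Rightarrow> real^2"
  assumes "convex_polygon k p"
    and "j = num_parallel_pairs k p"
    and "n = k - j"
  shows "\<exists>(P :: nat \<Rightarrow> real^2) (\<sigma> :: nat \<Rightarrow> nat).
           mono_on {..<2*n} \<sigma> \<and> \<sigma> ` {..<2*n} = {..<k} \<and>
           (\<forall>i<2*n. P i = p (\<sigma> i)) \<and>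
           (\<forall>i<n.
              let a = P i; b = P ((i+1) mod (2*n));
                  c = P (i+n); d = P ((i+n+1) mod (2*n)) in
              parallel_vec (b - a) (d - c)
              \<or> (c = d \<and> a \<noteq> b \<and> line_dir c (b - a) \<inter> polygon_interior k p = {})
              \<or> (a = b \<and> c \<noteq> d \<and> line_dir a (d - c) \<inter> polygon_interior k p = {}))"
proof -
  obtain \<sigma> where \<sigma>: "antipodal_listing k p n \<sigma>"
    using convex_polygon_antipodal_listing assms by blast
  then have supporting: "\<forall>i<n. antipodal_sides (supporting_line k p)
      (p (\<sigma> i)) (p (\<sigma> ((i+1) mod (2*n)))) (p (\<sigma> (i+n))) (p (\<sigma> ((i+n+1) mod (2*n))))"
    unfolding antipodal_listing_def by blast
  have "antipodal_sides (\<lambda>c e. line_dir c e \<inter> polygon_interior k p = {})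
      (p (\<sigma> i)) (p (\<sigma> ((i+1) mod (2*n)))) (p (\<sigma> (i+n))) (p (\<sigma> ((i+n+1) mod (2*n))))"
    if "i < n" for i
    using supporting[rule_format, OF that]
    by (rule antipodal_sides_mono[rotated]) (rule supporting_line_avoids_interior)
  with \<sigma> show ?thesis
    unfolding antipodal_listing_def antipodal_sides_def Let_def
    by (intro exI[of _ "p \<circ> \<sigma>"] exI[of _ \<sigma>]) simp
qed

end
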